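(* Let $q \geq 1$ and let $k$ be a positive integer with $k < n$. Let $\boldsymbol{B} = [\boldsymbol{B}[1] \ \cdots \ \boldsymbol{B}[n]] \in \mathbb{R}^{D \times N}$ be a dictionary with unit-norm columns, blocks $\boldsymbol{B}[i] \in \mathbb{R}^{D \times m_i}$, and pairwise disjoint block subspaces $\mathcal{S}_i = \operatorname{span}(\boldsymbol{B}[i])$. Assume that every signal $\boldsymbol{y} \in \mathbb{R}^D$ that admits a $k$-block-sparse representation admits a unique one. For an index set $\Lambda \subseteq \{1,\dots,n\}$ and $\boldsymbol{x} \in \bigoplus_{i \in \Lambda} \mathcal{S}_i$ let $$W_\Lambda(\boldsymbol{x}) = \min\Big\{ \sum_{i \in \Lambda} \|\boldsymbol{B}[i]\boldsymbol{c}[i]\|_q \;:\; \boldsymbol{x} = \sum_{i \in \Lambda} \boldsymbol{B}[i]\boldsymbol{c}[i] \Big\}.$$ Then the following are equivalent: (i) for every $\Lambda_k \subseteq \{1,\dots,n\}$ with $|\Lambda_k| = k$ and every $\boldsymbol{y} \in \bigoplus_{i \in \Lambda_k} \mathcal{S}_i$, every optimal solution $\boldsymbol{c}^*$ of $P'_{\ell_q/\ell_1}(\boldsymbol{y})$ satisfies $\boldsymbol{B}[i]\boldsymbol{c}^*[i] = \boldsymbol{0}$ for all $i \notin \Lambda_k$ (i.e. the solution of $P'_{\ell_q/\ell_1}$ coincides with that of $P'_{\ell_q/\ell_0}$); (ii) for every $\Lambda_k$ with $|\Lambda_k| = k$, writing $\widehat{\Lambda}_k = \{1,\dots,n\}\setminus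 \Lambda_k$, and every nonzero $\boldsymbol{x} \in \big(\bigoplus_{i \in \Lambda_k} \mathcal{S}_i\big) \cap \big(\bigoplus_{i \in \widehat{\Lambda}_k} \mathcal{S}_i\big)$, one has $W_{\Lambda_k}(\boldsymbol{x}) < W_{\widehat{\Lambda}_k}(\boldsymbol{x})$.
   Context: The dictionary $\boldsymbol{B} \in \mathbb{R}^{D\times N}$ has columns of unit Euclidean norm and is partitioned into $n$ blocks $\boldsymbol{B}[i] \in \mathbb{R}^{D \times m_i}$; blocks may have linearly dependent columns. $\mathcal{S}_i$ is the column span of $\boldsymbol{B}[i]$, and $\mathcal{S}_i \cap \mathcal{S}_j = \{0\}$ for $i \neq j$. A vector $\boldsymbol{c} \in \mathbb{R}^N$ is written $\boldsymbol{c} = (\boldsymbol{c}[1]; \dots; \boldsymbol{c}[n])$ with $\boldsymbol{c}[i] \in \mathbb{R}^{m_i}$. A $k$-block-sparse representation of $\boldsymbol{y}$ is an expression $\boldsymbol{y} = \sum_{i \in \Lambda} \boldsymbol{s}_i$ with $|\Lambda| \le k$ and $\boldsymbol{s}_i \in \mathcal{S}_i \setminus \{0\}$; it is unique if any two such expressions have the same $\Lambda$ and the same $\boldsymbol{s}_i$. $P'_{\ell_q/\ell_1}(\boldsymbol{y})$ is the convex program $\min_{\boldsymbol{c}} \sum_{i=1}^n \|\boldsymbol{B}[i]\boldsymbol{c}[i]\|_q$ subject to $\boldsymbol{y} = \boldsymbol{B}\boldsymbol{c}$; $P'_{\ell_q/\ell_0}(\boldsymbol{y})$ is $\min_{\boldsymbol{c}}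 \#\{i : \|\boldsymbol{B}[i]\boldsymbol{c}[i]\|_q \neq 0\}$ subject to $\boldsymbol{y} = \boldsymbol{B}\boldsymbol{c}$. *)

theory Defs
  imports "HOL-Analysis.Analysis"
begin

text \<open>Dictionary: block i (1 \<le> i \<le> n) has columns B i j for j < m i, vectors in R^D = real^'d.
 A coefficient vector c assigns c i j to column j of block i.\<close>

definition qnorm :: "real \<Rightarrow> real^'d \<Rightarrow> real" where
  "qnorm q x = (\<Sum>l\<in>UNIV. \<bar>x $ l\<bar> powr q) powr (1 / q)"

definition blockvec :: "(nat \<Rightarrow> nat \<Rightarrow> real^'d) \<Rightarrow> (nat \<Rightarrow> nat) \<Rightarrow> (nat \<Rightarrow> nat \<Rightarrow> real) \<Rightarrow> nat \<Rightarrow> real^'d" where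
  "blockvec B m c i = (\<Sum>j<m i. c i j *\<^sub>R B i j)"

definition blockspace :: "(nat \<Rightarrow> nat \<Rightarrow> real^'d) \<Rightarrow> (nat \<Rightarrow> nat) \<Rightarrow> nat \<Rightarrow> (real^'d) set" where
  "blockspace B m i = span (B i ` {..<m i})"

definition blocksum :: "(nat \<Rightarrow> nat \<Rightarrow> real^'d) \<Rightarrow> (nat \<Rightarrow> nat) \<Rightarrow> nat set \<Rightarrow> (real^'d) set" where
  "blocksum B m \<Lambda> = {(\<Sum>i\<in>\<Lambda>. s i) | s. \<forall>i\<in>\<Lambda>. s i \<in> blockspace B m i}"

definition block_sparse_rep ::
  "(nat \<Rightarrow> nat \<Rightarrow> real^'d) \<Rightarrow> (nat \<Rightarrow> nat) \<Rightarrow> nat \<Rightarrow> nat \<Rightarrow> real^'d \<Rightarrow> nat set \<Rightarrow> (nat \<Rightarrow> real^'d) \<Rightarrow> bool" where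
  "block_sparse_rep B m n k y \<Lambda> s \<longleftrightarrow>
     \<Lambda> \<subseteq> {1..n} \<and> card \<Lambda> \<le> k \<and>
     (\<forall>i\<in>\<Lambda>. s i \<in> blockspace B m i \<and> s i \<noteq> 0) \<and> y = (\<Sum>i\<in>\<Lambda>. s i)"

definition unique_block_sparse ::
  "(nat \<Rightarrow> nat \<Rightarrow> real^'d) \<Rightarrow> (nat \<Rightarrow> nat) \<Rightarrow> nat \<Rightarrow> nat \<Rightarrow> real^'d \<Rightarrow> bool" where
  "unique_block_sparse B m n k y \<longleftrightarrow>
     (\<forall>\<Lambda> s \<Lambda>' s'. block_sparse_rep B m n k y \<Lambda> s \<and> block_sparse_rep B m n k y \<Lambda>' s'
        \<longrightarrow> \<Lambda> = \<Lambda>' \<and> (\<forall>i\<in>\<Lambda>. s i = s' i))"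

definition feasible :: "(nat \<Rightarrow> nat \<Rightarrow> real^'d) \<Rightarrow> (nat \<Rightarrow> nat) \<Rightarrow> nat \<Rightarrow> real^'d \<Rightarrow> (nat \<Rightarrow> nat \<Rightarrow> real) \<Rightarrow> bool" where
  "feasible B m n y c \<longleftrightarrow> y = (\<Sum>i\<in>{1..n}. blockvec B m c i)"

definition obj_l1 :: "real \<Rightarrow> (nat \<Rightarrow> nat \<Rightarrow> real^'d) \<Rightarrow> (nat \<Rightarrow> nat) \<Rightarrow> nat \<Rightarrow> (nat \<Rightarrow> nat \<Rightarrow> real) \<Rightarrow> real" where
  "obj_l1 q B m n c = (\<Sum>i\<in>{1..n}. qnorm q (blockvec B m c i))"

definition optimal_l1 :: "real \<Rightarrow> (nat \<Rightarrow> nat \<Rightarrow> real^'d) \<Rightarrow> (nat \<Rightarrow> nat) \<Rightarrow> nat \<Rightarrow> real^'d \<Rightarrow> (nat \<Rightarrow> nat \<Rightarrow> real) \<Rightarrow> bool" where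
  "optimal_l1 q B m n y c \<longleftrightarrow> feasible B m n y c \<and>
     (\<forall>c'. feasible B m n y c' \<longrightarrow> obj_l1 q B m n c \<le> obj_l1 q B m n c')"

text \<open>W_\<Lambda>(x): the minimum (written as infimum of the attained set of values).\<close>
definition W :: "real \<Rightarrow> (nat \<Rightarrow> nat \<Rightarrow> real^'d) \<Rightarrow> (nat \<Rightarrow> nat) \<Rightarrow> nat set \<Rightarrow> real^'d \<Rightarrow> real" where
  "W q B m \<Lambda> x = Inf {(\<Sum>i\<in>\<Lambda>. qnorm q (blockvec B m c i)) | c. x = (\<Sum>i\<in>\<Lambda>. blockvec B m c i)}"

end

theory Submission
  imports Defs
begin

text \<open>Both $P'_{\ell_q/\ell_1}$ and $W_\Lambda$ depend on the coefficients only through the block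
components $s_i = B[i]c[i]$, so both minimise the cost $\sum_i \|s_i\|_q$ over decompositions of a
vector into components $s_i \in \mathcal{S}_i$; these minima are attained by compactness.
If an optimal decomposition of $y \in \bigoplus_{\Lambda} \mathcal{S}_i$ had nonzero components
outside $\Lambda$, their sum $x$ lies in both $\bigoplus_{\Lambda}$ and $\bigoplus_{\widehat\Lambda}$;
by (ii) and the triangle inequality, moving $x$ into the blocks of $\Lambda$ along a
$W_\Lambda$-optimal decomposition strictly lowers the cost.
Conversely, if $W_{\widehat\Lambda}(x) \le W_\Lambda(x)$ for some nonzero $x$, then a
$W_{\widehat\Lambda}$-optimal decomposition of $x$ is optimal for $P'_{\ell_q/\ell_1}(x)$, so by (i)
it vanishes, forcing $x = 0$.\<close>

lemma qnorm_nonneg: "0 \<le> qnorm q x"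
  by (simp add: qnorm_def)

lemma qnorm_0 [simp]: "qnorm q 0 = 0"
  by (simp add: qnorm_def)

lemma qnorm_eq_0_iff [simp]: "qnorm q x = 0 \<longleftrightarrow> x = 0"
  by (simp add: qnorm_def sum_nonneg_eq_0_iff vec_eq_iff)

lemma qnorm_pos_iff: "0 < qnorm q x \<longleftrightarrow> x \<noteq> 0"
  using qnorm_nonneg[of q x] qnorm_eq_0_iff[of q x] by linarith

lemma qnorm_powr: "q \<noteq> 0 \<Longrightarrow> qnorm q x powr q = (\<Sum>l\<in>UNIV. \<bar>x $ l\<bar> powr q)"
  by (simp add: qnorm_def powr_powr sum_nonneg)

lemma abs_component_le_qnorm:
  assumes "q > 0" shows "\<bar>x $ l\<bar> \<le> qnorm q x"
proof -
  have "\<bar>x $ l\<bar> = (\<bar>x $ l\<bar> powr q) powr (1/q)"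
    using assms by (simp add: powr_powr)
  also have "\<dots> \<le> qnorm q x"
    unfolding qnorm_def using assms by (intro powr_mono2) (auto intro: member_le_sum)
  finally show ?thesis .
qed

lemma norm_le_qnorm: "q > 0 \<Longrightarrow> norm (x::real^'d) \<le> CARD('d) * qnorm q x"
  using norm_le_l1_cart[of x] sum_mono[of UNIV "\<lambda>l. \<bar>x $ l\<bar>" "\<lambda>_. qnorm q x"]
  by (simp add: abs_component_le_qnorm)

lemma continuous_on_qnorm: "q > 0 \<Longrightarrow> continuous_on UNIV (qnorm q :: real^'d \<Rightarrow> real)"
  unfolding qnorm_def[abs_def]
  by (intro continuous_on_powr' continuous_on_sum continuous_intros) (auto intro: sum_nonneg)

lemma qnorm_scaleR: "q > 0 \<Longrightarrow> qnorm q (c *\<^sub>R x) = \<bar>c\<bar> * qnorm q x"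
  by (simp add: qnorm_def abs_mult powr_mult sum_distrib_left[symmetric] powr_powr)

lemma convex_on_powr_nonneg:
  assumes "p \<ge> 1" shows "convex_on {0..} (\<lambda>x::real. x powr p)"
proof (rule convex_onI)
  fix t x y :: real assume t: "0 < t" "t < 1" and xy: "x \<in> {0..}" "y \<in> {0..}"
  have scaled: "(s * z) powr p \<le> s * z powr p" if "0 \<le> s" "s \<le> 1" "0 \<le> z" for s z :: real
    using that powr_le_one_le[of s p] assms
    by (cases "s = 0") (auto simp: powr_mult intro: mult_right_mono)
  show "((1 - t) *\<^sub>R x + t *\<^sub>R y) powr p \<le> (1 - t) * x powr p + t * y powr p"
  proof (cases "x = 0 \<or> y = 0")
    case True thus ?thesis using scaled[of t y] scaled[of "1-t" x] t xy by auto
  next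
    case False thus ?thesis
      using convex_onD[OF powr_convex[OF assms], of t x y] t xy by simp
  qed
qed (simp add: convex_real_interval)

lemma qnorm_convex_combination_le_1:
  fixes a b :: "real^'d"
  assumes q: "q \<ge> 1" and ab: "qnorm q a \<le> 1" "qnorm q b \<le> 1" and t: "0 \<le> t" "t \<le> 1"
  shows "qnorm q ((1 - t) *\<^sub>R a + t *\<^sub>R b) \<le> 1"
proof -
  have cvx: "convex_on {0..} (\<lambda>x::real. x powr q)" using q by (rule convex_on_powr_nonneg)
  have "(\<Sum>l\<in>UNIV. \<bar>((1 - t) *\<^sub>R a + t *\<^sub>R b) $ l\<bar> powr q)
      \<le> (\<Sum>l\<in>UNIV. ((1 - t) * \<bar>a $ l\<bar> + t * \<bar>b $ l\<bar>) powr q)"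
    using q t by (intro sum_mono powr_mono2) (auto intro: abs_triangle_ineq[THEN order_trans] simp: abs_mult)
  also have "\<dots> \<le> (\<Sum>l\<in>UNIV. (1 - t) * \<bar>a $ l\<bar> powr q + t * \<bar>b $ l\<bar> powr q)"
    using t by (intro sum_mono convex_onD[OF cvx, simplified]) auto
  also have "\<dots> = (1 - t) * qnorm q a powr q + t * qnorm q b powr q"
    using q by (simp add: qnorm_powr sum.distrib sum_distrib_left)
  also have "\<dots> \<le> (1 - t) * 1 + t * 1"
    using q t ab by (intro add_mono mult_left_mono powr_le1) (auto simp: qnorm_nonneg)
  finally have "qnorm q ((1 - t) *\<^sub>R a + t *\<^sub>R b) powr q \<le> 1"
    using q by (simp add: qnorm_powr)
  hence "(qnorm q ((1 - t) *\<^sub>R a + t *\<^sub>R b) powr q) powr (1 / q) \<le> 1 powr (1 / q)"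
    using q by (intro powr_mono2) auto
  thus ?thesis using q by (simp add: powr_powr)
qed

text \<open>Minkowski's inequality, from the convexity of the unit ball and homogeneity.\<close>
lemma qnorm_triangle:
  fixes a b :: "real^'d"
  assumes q: "q \<ge> 1" shows "qnorm q (a + b) \<le> qnorm q a + qnorm q b"
proof (cases "a = 0 \<or> b = 0")
  case False
  define A B where "A = qnorm q a" and "B = qnorm q b"
  have pos: "A > 0" "B > 0" using False by (auto simp: A_def B_def qnorm_pos_iff)
  define t where "t = B / (A + B)"
  have "a + b = (A + B) *\<^sub>R ((1 - t) *\<^sub>R (inverse A *\<^sub>R a) + t *\<^sub>R (inverse B *\<^sub>R b))"
    using pos by (simp add: t_def field_simps scaleR_add_right)
  moreover have "qnorm q ((1 - t) *\<^sub>R (inverse A *\<^sub>R a) + t *\<^sub>R (inverse B *\<^sub>R b)) \<le> 1"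
    using q pos by (intro qnorm_convex_combination_le_1) (auto simp: t_def qnorm_scaleR A_def B_def field_simps)
  ultimately show ?thesis
    using q pos by (simp add: qnorm_scaleR A_def B_def)
qed auto

lemma blockvec_in_blockspace: "blockvec B m c i \<in> blockspace B m i"
  unfolding blockvec_def blockspace_def by (intro span_sum span_scale span_base) auto

lemma blockspace_imp_blockvec:
  assumes "v \<in> blockspace B m i"
  shows "\<exists>a. v = (\<Sum>j<m i. a j *\<^sub>R B i j)"
  using assms unfolding blockspace_def
proof (induction rule: span_induct_alt)
  case base
  show ?case by (rule exI[of _ "\<lambda>_. 0"]) simp
next
  case (step c x y)
  then obtain j0 a where j0: "j0 < m i" "x = B i j0" and a: "y = (\<Sum>j<m i. a j *\<^sub>R B i j)"
    by auto
  have "c *\<^sub>R x + y = (\<Sum>j<m i. (a j + (if j = j0 then c else 0)) *\<^sub>R B i j)"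
    using j0 a by (simp add: scaleR_add_left sum.distrib if_distrib[of "\<lambda>r. r *\<^sub>R _"] cong: if_cong)
  thus ?case by (rule exI[of _ "\<lambda>j. a j + (if j = j0 then c else 0)"])
qed

lemma ex_coeffs_blockvec:
  assumes "\<forall>i\<in>I. s i \<in> blockspace B m i"
  shows "\<exists>c. \<forall>i\<in>I. blockvec B m c i = s i"
proof -
  from assms have "\<forall>i\<in>I. \<exists>a. s i = (\<Sum>j<m i. a j *\<^sub>R B i j)"
    by (blast dest: blockspace_imp_blockvec)
  then obtain c where "\<forall>i\<in>I. s i = (\<Sum>j<m i. c i j *\<^sub>R B i j)" by metis
  thus ?thesis unfolding blockvec_def by auto
qed

text \<open>Decompositions are over the block components rather than the coefficients: when a block
has dependent columns the coefficients of a minimising sequence may be unbounded, its components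
cannot.\<close>

definition block_decomp ::
  "(nat \<Rightarrow> nat \<Rightarrow> real^'d) \<Rightarrow> (nat \<Rightarrow> nat) \<Rightarrow> nat set \<Rightarrow> real^'d \<Rightarrow> (nat \<Rightarrow> real^'d) \<Rightarrow> bool" where
  "block_decomp B m I x s \<longleftrightarrow> (\<forall>i\<in>I. s i \<in> blockspace B m i) \<and> x = (\<Sum>i\<in>I. s i)"

definition block_cost :: "real \<Rightarrow> nat set \<Rightarrow> (nat \<Rightarrow> real^'d) \<Rightarrow> real" where
  "block_cost q I s = (\<Sum>i\<in>I. qnorm q (s i))"

definition min_block_decomp ::
  "real \<Rightarrow> (nat \<Rightarrow> nat \<Rightarrow> real^'d) \<Rightarrow> (nat \<Rightarrow> nat) \<Rightarrow> nat set \<Rightarrow> real^'d \<Rightarrow> (nat \<Rightarrow> real^'d) \<Rightarrow> bool" where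
  "min_block_decomp q B m I x s \<longleftrightarrow> block_decomp B m I x s \<and>
     (\<forall>s'. block_decomp B m I x s' \<longrightarrow> block_cost q I s \<le> block_cost q I s')"

lemma blocksum_iff_block_decomp: "x \<in> blocksum B m I \<longleftrightarrow> (\<exists>s. block_decomp B m I x s)"
  by (auto simp: blocksum_def block_decomp_def)

lemma block_decomp_blockvec: "block_decomp B m I (\<Sum>i\<in>I. blockvec B m c i) (blockvec B m c)"
  by (simp add: block_decomp_def blockvec_in_blockspace)

lemma block_cost_nonneg: "0 \<le> block_cost q I s"
  by (simp add: block_cost_def sum_nonneg qnorm_nonneg)

lemma norm_le_block_cost:
  fixes s :: "nat \<Rightarrow> real^'d"
  assumes "q > 0" "finite I" "i \<in> I"
  shows "norm (s i) \<le> CARD('d) * block_cost q I s"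
proof -
  have "qnorm q (s i) \<le> block_cost q I s"
    unfolding block_cost_def using assms(2,3) by (intro member_le_sum) (auto simp: qnorm_nonneg)
  hence "CARD('d) * qnorm q (s i) \<le> CARD('d) * block_cost q I s"
    by (intro mult_left_mono) auto
  with norm_le_qnorm[OF assms(1), of "s i"] show ?thesis by linarith
qed

lemma block_decomp_vanishing:
  assumes "finite N" "I \<subseteq> N" "\<forall>i\<in>N - I. s i = 0"
  shows "block_decomp B m N x s \<longleftrightarrow> block_decomp B m I x s"
proof -
  have "(\<Sum>i\<in>N. s i) = (\<Sum>i\<in>I. s i)"
    using assms by (intro sum.mono_neutral_right) auto
  moreover have "s i \<in> blockspace B m i" if "i \<in> N - I" for i
    using assms that by (simp add: blockspace_def span_zero)
  ultimately show ?thesis using assms(2) by (auto simp: block_decomp_def)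
qed

lemma block_cost_vanishing:
  assumes "finite N" "I \<subseteq> N" "\<forall>i\<in>N - I. s i = 0"
  shows "block_cost q N s = block_cost q I s"
  unfolding block_cost_def using assms by (intro sum.mono_neutral_right) auto

lemma block_decomp_extend_zero:
  assumes "block_decomp B m I x s" "finite N" "I \<subseteq> N"
  shows "block_decomp B m N x (\<lambda>i. if i \<in> I then s i else 0)"
proof -
  have "block_decomp B m I x (\<lambda>i. if i \<in> I then s i else 0)"
    using assms(1) by (simp add: block_decomp_def)
  with assms(2,3) show ?thesis by (subst block_decomp_vanishing) auto
qed

lemma block_cost_extend_zero:
  assumes "finite N" "I \<subseteq> N"
  shows "block_cost q N (\<lambda>i. if i \<in> I then s i else 0) = block_cost q I s"
  using assms by (subst block_cost_vanishing[where I = I]) (auto simp: block_cost_def)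

lemma block_cost_add_le:
  "q \<ge> 1 \<Longrightarrow> block_cost q I (\<lambda>i. s i + t i) \<le> block_cost q I s + block_cost q I t"
  unfolding block_cost_def sum.distrib[symmetric] by (intro sum_mono qnorm_triangle)

lemma convergent_subseq_finite_family:
  fixes f :: "nat \<Rightarrow> 'a \<Rightarrow> 'b::heine_borel"
  assumes "finite I" "\<And>i. i \<in> I \<Longrightarrow> bounded (range (\<lambda>k. f k i))"
  obtains r l where "strict_mono r" "\<And>i. i \<in> I \<Longrightarrow> (\<lambda>k. f (r k) i) \<longlonglongrightarrow> l i"
proof -
  have "\<exists>l r. strict_mono r \<and> (\<forall>e>0. \<forall>\<^sub>F k in sequentially. \<forall>i\<in>I. dist (f (r k) i) (l i) < e)"
    using compact_lemma_general[where f=f and proj="\<lambda>x i. x i" and unproj=id and basis=I] assms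
    by (auto simp: image_image)
  then obtain l r where r: "strict_mono r"
    and lim: "\<forall>e>0. \<forall>\<^sub>F k in sequentially. \<forall>i\<in>I. dist (f (r k) i) (l i) < e" by blast
  have "(\<lambda>k. f (r k) i) \<longlonglongrightarrow> l i" if "i \<in> I" for i
  proof (rule tendstoI)
    fix e :: real assume "e > 0"
    with lim have "\<forall>\<^sub>F k in sequentially. \<forall>i\<in>I. dist (f (r k) i) (l i) < e" by blast
    then show "\<forall>\<^sub>F k in sequentially. dist (f (r k) i) (l i) < e"
      by (rule eventually_mono) (use that in blast)
  qed
  with r show thesis by (rule that)
qed

lemma block_decomp_limit:
  assumes "\<And>k. block_decomp B m I x (s k)" "\<And>i. i \<in> I \<Longrightarrow> (\<lambda>k. s k i) \<longlonglongrightarrow> l i"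
  shows "block_decomp B m I x l"
proof -
  have "l i \<in> blockspace B m i" if "i \<in> I" for i
  proof (rule closed_sequentially)
    show "closed (blockspace B m i)" unfolding blockspace_def by (intro closed_subspace subspace_span)
  qed (use assms that in \<open>auto simp: block_decomp_def\<close>)
  moreover have "(\<lambda>k. \<Sum>i\<in>I. s k i) \<longlonglongrightarrow> (\<Sum>i\<in>I. l i)"
    using assms(2) by (intro tendsto_sum)
  hence "x = (\<Sum>i\<in>I. l i)"
    using assms(1) by (simp add: block_decomp_def LIMSEQ_const_iff)
  ultimately show ?thesis by (simp add: block_decomp_def)
qed

lemma ex_min_block_decomp:
  fixes B :: "nat \<Rightarrow> nat \<Rightarrow> real^'d"
  assumes q: "q > 0" and I: "finite I" and x: "x \<in> blocksum B m I"
  obtains s where "min_block_decomp q B m I x s"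
proof -
  define V where "V = Inf {block_cost q I s | s. block_decomp B m I x s}"
  have ne: "{block_cost q I s | s. block_decomp B m I x s} \<noteq> {}"
    using x by (auto simp: blocksum_iff_block_decomp)
  have V_le: "V \<le> block_cost q I s" if "block_decomp B m I x s" for s
    unfolding V_def using that by (intro cInf_lower bdd_belowI[of _ 0]) (auto simp: block_cost_nonneg)
  have "\<forall>k. \<exists>s. block_decomp B m I x s \<and> block_cost q I s < V + 1 / Suc k"
    using cInf_lessD[OF ne, of "V + 1 / Suc k" for k] by (auto simp: V_def)
  then obtain s where s: "\<And>k. block_decomp B m I x (s k)"
    and s_cost: "\<And>k. block_cost q I (s k) < V + 1 / Suc k" by metis
  have "norm (s k i) \<le> CARD('d) * (V + 1)" if "i \<in> I" for k i
  proof -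
    have "1 / real (Suc k) \<le> 1" by simp
    with s_cost[of k] have "block_cost q I (s k) \<le> V + 1" by linarith
    with norm_le_block_cost[OF q I that, of "s k"] show ?thesis
      by (meson mult_left_mono of_nat_0_le_iff order_trans)
  qed
  hence "bounded (range (\<lambda>k. s k i))" if "i \<in> I" for i
    using that unfolding bounded_iff by blast
  then obtain r l where r: "strict_mono r" and lim: "\<And>i. i \<in> I \<Longrightarrow> (\<lambda>k. s (r k) i) \<longlonglongrightarrow> l i"
    using convergent_subseq_finite_family[OF I] by metis
  have l: "block_decomp B m I x l"
    using s lim by (rule block_decomp_limit)
  have "(\<lambda>k. block_cost q I (s (r k))) \<longlonglongrightarrow> block_cost q I l"
    unfolding block_cost_def
    by (intro tendsto_sum continuous_on_tendsto_compose[OF continuous_on_qnorm[OF q], unfolded o_def] lim) auto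
  moreover have "(\<lambda>k. V + 1 / Suc (r k)) \<longlonglongrightarrow> V"
    using LIMSEQ_subseq_LIMSEQ[OF tendsto_add[OF tendsto_const LIMSEQ_Suc[OF lim_inverse_n']] r]
    by (simp add: o_def)
  ultimately have "block_cost q I l \<le> V"
    using s_cost by (intro LIMSEQ_le) (auto intro: less_imp_le)
  with l V_le show thesis
    by (intro that) (force simp: min_block_decomp_def)
qed

lemma W_eq_block_cost:
  assumes s: "min_block_decomp q B m I x s"
  shows "W q B m I x = block_cost q I s"
proof -
  obtain c where c: "\<forall>i\<in>I. blockvec B m c i = s i"
    using s ex_coeffs_blockvec[of I s B m] by (auto simp: min_block_decomp_def block_decomp_def)
  show ?thesis unfolding W_def
  proof (rule cInf_eq_minimum)
    have "x = (\<Sum>i\<in>I. blockvec B m c i)" "block_cost q I s = (\<Sum>i\<in>I. qnorm q (blockvec B m c i))"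
      using s c by (simp_all add: min_block_decomp_def block_decomp_def block_cost_def)
    then show "block_cost q I s \<in> {\<Sum>i\<in>I. qnorm q (blockvec B m c i) |c. x = (\<Sum>i\<in>I. blockvec B m c i)}"
      by blast
  next
    fix v assume "v \<in> {\<Sum>i\<in>I. qnorm q (blockvec B m c i) |c. x = (\<Sum>i\<in>I. blockvec B m c i)}"
    then obtain c' where "v = block_cost q I (blockvec B m c')" "x = (\<Sum>i\<in>I. blockvec B m c' i)"
      by (auto simp: block_cost_def)
    with s block_decomp_blockvec[of B m I c'] show "block_cost q I s \<le> v"
      by (simp add: min_block_decomp_def)
  qed
qed

lemma optimal_l1_imp_min_block_decomp:
  assumes "optimal_l1 q B m n y c"
  shows "min_block_decomp q B m {1..n} y (blockvec B m c)"
  unfolding min_block_decomp_def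
proof (intro conjI allI impI)
  show "block_decomp B m {1..n} y (blockvec B m c)"
    using assms block_decomp_blockvec[of B m "{1..n}" c] by (simp add: optimal_l1_def feasible_def)
  fix s assume "block_decomp B m {1..n} y s"
  moreover obtain c' where c': "\<forall>i\<in>{1..n}. blockvec B m c' i = s i"
    using calculation ex_coeffs_blockvec[of "{1..n}" s B m] by (auto simp: block_decomp_def)
  ultimately have "feasible B m n y c'"
    by (simp add: block_decomp_def feasible_def)
  with assms c' show "block_cost q {1..n} (blockvec B m c) \<le> block_cost q {1..n} s"
    by (auto simp: optimal_l1_def obj_l1_def block_cost_def)
qed

lemma min_block_decomp_imp_ex_optimal_l1:
  assumes s: "min_block_decomp q B m {1..n} y s"
  obtains c where "optimal_l1 q B m n y c" "\<forall>i\<in>{1..n}. blockvec B m c i = s i"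
proof -
  obtain c where c: "\<forall>i\<in>{1..n}. blockvec B m c i = s i"
    using s ex_coeffs_blockvec[of "{1..n}" s B m] by (auto simp: min_block_decomp_def block_decomp_def)
  have opt: "optimal_l1 q B m n y c"
    unfolding optimal_l1_def
  proof (intro conjI allI impI)
    show "feasible B m n y c"
      using s c by (simp add: min_block_decomp_def block_decomp_def feasible_def)
    fix c' assume "feasible B m n y c'"
    hence "block_cost q {1..n} s \<le> block_cost q {1..n} (blockvec B m c')"
      using s block_decomp_blockvec[of B m "{1..n}" c'] by (simp add: min_block_decomp_def feasible_def)
    with c show "obj_l1 q B m n c \<le> obj_l1 q B m n c'"
      by (simp add: obj_l1_def block_cost_def)
  qed
  from opt c show thesis by (rule that)
qed

lemma W_less_if_min_block_decomps_vanish: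
  fixes B :: "nat \<Rightarrow> nat \<Rightarrow> real^'d"
  assumes q: "q > 0" and N: "finite N" "\<Lambda> \<subseteq> N"
    and x: "x \<in> blocksum B m \<Lambda>" "x \<in> blocksum B m (N - \<Lambda>)" "x \<noteq> 0"
    and vanish: "\<And>s. min_block_decomp q B m N x s \<Longrightarrow> \<forall>i\<in>N - \<Lambda>. s i = 0"
  shows "W q B m \<Lambda> x < W q B m (N - \<Lambda>) x"
proof (rule ccontr)
  assume "\<not> ?thesis"
  hence W_le: "W q B m (N - \<Lambda>) x \<le> W q B m \<Lambda> x" by simp
  have fin: "finite \<Lambda>" "finite (N - \<Lambda>)" using N finite_subset by auto
  obtain u where "block_decomp B m \<Lambda> x u" using x(1) by (auto simp: blocksum_iff_block_decomp)
  hence "x \<in> blocksum B m N"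
    using block_decomp_extend_zero N by (blast intro: blocksum_iff_block_decomp[THEN iffD2])
  then obtain s where s: "min_block_decomp q B m N x s" using ex_min_block_decomp[OF q N(1)] by blast
  have s0: "\<forall>i\<in>N - \<Lambda>. s i = 0" using vanish[OF s] .
  obtain d where d: "min_block_decomp q B m \<Lambda> x d" using ex_min_block_decomp[OF q fin(1) x(1)] by blast
  have "block_decomp B m \<Lambda> x s"
    using s s0 N block_decomp_vanishing[of N \<Lambda> s] by (simp add: min_block_decomp_def)
  hence "W q B m \<Lambda> x \<le> block_cost q N s"
    using d s0 N block_cost_vanishing[of N \<Lambda> s] by (simp add: W_eq_block_cost min_block_decomp_def)
  obtain t where t: "min_block_decomp q B m (N - \<Lambda>) x t"
    using ex_min_block_decomp[OF q fin(2) x(2)] by blast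
  define t0 where "t0 = (\<lambda>i. if i \<in> N - \<Lambda> then t i else 0)"
  have "block_cost q N t0 = block_cost q (N - \<Lambda>) t"
    unfolding t0_def using N by (intro block_cost_extend_zero) auto
  also have "\<dots> = W q B m (N - \<Lambda>) x" using t by (simp add: W_eq_block_cost)
  also have "\<dots> \<le> block_cost q N s" using W_le \<open>W q B m \<Lambda> x \<le> _\<close> by linarith
  finally have "min_block_decomp q B m N x t0"
    using s t N block_decomp_extend_zero[of B m "N - \<Lambda>" x t N]
    by (auto simp: min_block_decomp_def t0_def intro: order_trans)
  hence "\<forall>i\<in>N - \<Lambda>. t i = 0" using vanish unfolding t0_def by fastforce
  hence "x = 0" using t by (simp add: min_block_decomp_def block_decomp_def)
  with x(3) show False ..
qed

lemma min_block_decomp_vanishes_if_W_less: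
  fixes B :: "nat \<Rightarrow> nat \<Rightarrow> real^'d"
  assumes q: "q \<ge> 1" and N: "finite N" "\<Lambda> \<subseteq> N" and y: "y \<in> blocksum B m \<Lambda>"
    and s: "min_block_decomp q B m N y s"
    and W_less: "\<And>x. x \<in> blocksum B m \<Lambda> \<Longrightarrow> x \<in> blocksum B m (N - \<Lambda>) \<Longrightarrow> x \<noteq> 0 \<Longrightarrow>
                   W q B m \<Lambda> x < W q B m (N - \<Lambda>) x"
    and i0: "i0 \<in> N - \<Lambda>"
  shows "s i0 = 0"
proof (rule ccontr)
  assume "s i0 \<noteq> 0"
  have q0: "q > 0" using q by simp
  have fin: "finite \<Lambda>" "finite (N - \<Lambda>)" using N finite_subset by auto
  have split: "sum f N = sum f \<Lambda> + sum f (N - \<Lambda>)" for f :: "nat \<Rightarrow> 'a::comm_monoid_add"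
    using sum.subset_diff[OF N(2,1)] by (simp add: add.commute)
  have sN: "block_decomp B m N y s" using s by (simp add: min_block_decomp_def)
  define x where "x = (\<Sum>i\<in>N - \<Lambda>. s i)"
  obtain u where u: "block_decomp B m \<Lambda> y u" using y by (auto simp: blocksum_iff_block_decomp)
  have "block_decomp B m (N - \<Lambda>) x s" using sN by (simp add: block_decomp_def x_def)
  moreover have "block_decomp B m \<Lambda> x (\<lambda>i. u i - s i)"
    using u sN split[of s] N(2)
    by (auto simp: block_decomp_def x_def sum_subtractf blockspace_def intro: span_diff)
  ultimately have x_in: "x \<in> blocksum B m \<Lambda>" "x \<in> blocksum B m (N - \<Lambda>)"
    by (auto simp: blocksum_iff_block_decomp)
  obtain d where d: "min_block_decomp q B m \<Lambda> x d" using ex_min_block_decomp[OF q0 fin(1) x_in(1)] .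
  have "0 < qnorm q (s i0)" using \<open>s i0 \<noteq> 0\<close> by (simp add: qnorm_pos_iff)
  also have "\<dots> \<le> block_cost q (N - \<Lambda>) s"
    unfolding block_cost_def using fin i0 by (intro member_le_sum) (auto simp: qnorm_nonneg)
  finally have pos: "0 < block_cost q (N - \<Lambda>) s" .
  have d_less: "block_cost q \<Lambda> d < block_cost q (N - \<Lambda>) s"
  proof (cases "x = 0")
    case True
    have "block_decomp B m \<Lambda> x (\<lambda>_. 0)" using True by (simp add: block_decomp_def blockspace_def span_zero)
    hence "block_cost q \<Lambda> d \<le> 0" using d by (auto simp: min_block_decomp_def block_cost_def)
    with pos show ?thesis by linarith
  next
    case False
    obtain e where e: "min_block_decomp q B m (N - \<Lambda>) x e" using ex_min_block_decomp[OF q0 fin(2) x_in(2)] .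
    have "block_cost q \<Lambda> d = W q B m \<Lambda> x" using d by (simp add: W_eq_block_cost)
    also have "\<dots> < W q B m (N - \<Lambda>) x" using W_less[OF x_in False] .
    also have "\<dots> = block_cost q (N - \<Lambda>) e" using e by (simp add: W_eq_block_cost)
    also have "\<dots> \<le> block_cost q (N - \<Lambda>) s"
      using e \<open>block_decomp B m (N - \<Lambda>) x s\<close> by (simp add: min_block_decomp_def)
    finally show ?thesis .
  qed
  have "block_decomp B m \<Lambda> y (\<lambda>i. s i + d i)"
    using sN d split[of s] N(2)
    by (auto simp: min_block_decomp_def block_decomp_def x_def sum.distrib blockspace_def intro: span_add)
  hence "block_decomp B m N y (\<lambda>i. if i \<in> \<Lambda> then s i + d i else 0)"
    using N by (rule block_decomp_extend_zero)
  moreover have "block_cost q N (\<lambda>i. if i \<in> \<Lambda> then s i + d i else 0) < block_cost q N s"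
  proof -
    have "block_cost q N (\<lambda>i. if i \<in> \<Lambda> then s i + d i else 0) = block_cost q \<Lambda> (\<lambda>i. s i + d i)"
      using N by (rule block_cost_extend_zero)
    also have "\<dots> \<le> block_cost q \<Lambda> s + block_cost q \<Lambda> d" using q by (rule block_cost_add_le)
    also have "\<dots> < block_cost q \<Lambda> s + block_cost q (N - \<Lambda>) s" using d_less by simp
    also have "\<dots> = block_cost q N s" using split[of "\<lambda>i. qnorm q (s i)"] by (simp add: block_cost_def)
    finally show ?thesis .
  qed
  ultimately show False using s by (auto simp: min_block_decomp_def not_le[symmetric])
qed

lemma W_less_if_optimal_l1_vanishes:
  fixes B :: "nat \<Rightarrow> nat \<Rightarrow> real^'d"
  assumes "q > 0" "\<Lambda> \<subseteq> {1..n}" "x \<in> blocksum B m \<Lambda> \<inter> blocksum B m ({1..n} - \<Lambda>)" "x \<noteq> 0"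
    and vanish: "\<And>c. optimal_l1 q B m n x c \<Longrightarrow> \<forall>i\<in>{1..n} - \<Lambda>. blockvec B m c i = 0"
  shows "W q B m \<Lambda> x < W q B m ({1..n} - \<Lambda>) x"
proof (rule W_less_if_min_block_decomps_vanish)
  fix s assume "min_block_decomp q B m {1..n} x s"
  then obtain c where "optimal_l1 q B m n x c" "\<forall>i\<in>{1..n}. blockvec B m c i = s i"
    by (rule min_block_decomp_imp_ex_optimal_l1)
  with vanish show "\<forall>i\<in>{1..n} - \<Lambda>. s i = 0" by auto
qed (use assms in auto)

lemma optimal_l1_vanishes_if_W_less:
  fixes B :: "nat \<Rightarrow> nat \<Rightarrow> real^'d"
  assumes "q \<ge> 1" "\<Lambda> \<subseteq> {1..n}" "y \<in> blocksum B m \<Lambda>" "optimal_l1 q B m n y c"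
    and W_less: "\<And>x. x \<in> blocksum B m \<Lambda> \<inter> blocksum B m ({1..n} - \<Lambda>) \<Longrightarrow> x \<noteq> 0 \<Longrightarrow>
                   W q B m \<Lambda> x < W q B m ({1..n} - \<Lambda>) x"
  shows "\<forall>i\<in>{1..n} - \<Lambda>. blockvec B m c i = 0"
  using min_block_decomp_vanishes_if_W_less
      [OF assms(1) _ assms(2,3) optimal_l1_imp_min_block_decomp[OF assms(4)]] W_less
  by auto

theorem theorem2:
  fixes q :: real and n k :: nat and m :: "nat \<Rightarrow> nat"
    and B :: "nat \<Rightarrow> nat \<Rightarrow> real^'d"
  assumes hq: "q \<ge> 1"
    and hk: "0 < k" "k < n"
    and unit: "\<And>i j. i \<in> {1..n} \<Longrightarrow> j < m i \<Longrightarrow> norm (B i j) = 1"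
    and disj: "\<And>i j. i \<in> {1..n} \<Longrightarrow> j \<in> {1..n} \<Longrightarrow> i \<noteq> j \<Longrightarrow>
                 blockspace B m i \<inter> blockspace B m j = {0}"
    and uniq: "\<And>y. (\<exists>\<Lambda> s. block_sparse_rep B m n k y \<Lambda> s) \<Longrightarrow> unique_block_sparse B m n k y"
  shows "(\<forall>\<Lambda>. \<Lambda> \<subseteq> {1..n} \<and> card \<Lambda> = k \<longrightarrow>
            (\<forall>y \<in> blocksum B m \<Lambda>. \<forall>c. optimal_l1 q B m n y c \<longrightarrow>
               (\<forall>i \<in> {1..n} - \<Lambda>. blockvec B m c i = 0)))
     \<longleftrightarrow>
         (\<forall>\<Lambda>. \<Lambda> \<subseteq> {1..n} \<and> card \<Lambda> = k \<longrightarrow>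
            (\<forall>x \<in> blocksum B m \<Lambda> \<inter> blocksum B m ({1..n} - \<Lambda>). x \<noteq> 0 \<longrightarrow>
               W q B m \<Lambda> x < W q B m ({1..n} - \<Lambda>) x))"
proof (intro iffI allI impI ballI)
  fix \<Lambda> x assume "\<forall>\<Lambda>. \<Lambda> \<subseteq> {1..n} \<and> card \<Lambda> = k \<longrightarrow>
      (\<forall>y \<in> blocksum B m \<Lambda>. \<forall>c. optimal_l1 q B m n y c \<longrightarrow> (\<forall>i \<in> {1..n} - \<Lambda>. blockvec B m c i = 0))"
    and "\<Lambda> \<subseteq> {1..n} \<and> card \<Lambda> = k" "x \<in> blocksum B m \<Lambda> \<inter> blocksum B m ({1..n} - \<Lambda>)" "x \<noteq> 0"
  with hq show "W q B m \<Lambda> x < W q B m ({1..n} - \<Lambda>) x"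
    by (intro W_less_if_optimal_l1_vanishes) auto
next
  fix \<Lambda> y c i assume "\<forall>\<Lambda>. \<Lambda> \<subseteq> {1..n} \<and> card \<Lambda> = k \<longrightarrow>
      (\<forall>x \<in> blocksum B m \<Lambda> \<inter> blocksum B m ({1..n} - \<Lambda>). x \<noteq> 0 \<longrightarrow> W q B m \<Lambda> x < W q B m ({1..n} - \<Lambda>) x)"
    and "\<Lambda> \<subseteq> {1..n} \<and> card \<Lambda> = k" "y \<in> blocksum B m \<Lambda>" "optimal_l1 q B m n y c" "i \<in> {1..n} - \<Lambda>"
  with hq show "blockvec B m c i = 0"
    using optimal_l1_vanishes_if_W_less[of q \<Lambda> n y B m c] by auto
qed
end
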